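(* In the setting described in the context (no inter-cell interference), suppose the target rates $R_k,R_{\tilde k}>0$ satisfy $$R_{\tilde k}<\log_2\left(1+\frac{\beta_{\tilde k}^2|\mu_k|^2}{\sum_{i=1}^K|\boldsymbol\psi_i^{\mathrm H}\boldsymbol\nu_1|^2+\beta_k^2\beta_{\tilde k}^2|\mu_k|^2+\frac{\sigma_k^2}{P\ell(d_k)}}\right),\qquad R_k<\log_2\left(1+\frac{|\mu_k|^2\beta_k^2}{\sum_{i=1}^K|\boldsymbol\psi_i^{\mathrm H}\boldsymbol\nu_2|^2+\frac{\sigma_k^2}{P\ell(d_k)}}\right).$$ Then the near-user outage probability $$p_k=\Pr\left(\log_2(1+\mathrm{SINR}_{k\to\tilde k})<R_{\tilde k}\ \text{ or }\ \log_2(1+\mathrm{SINR}_k)<R_k\right)$$ tends to $0$ as $\sigma_h^2\to0$ (equivalently, as the channel K factor $\mathcal K=\|\hat{\mathbf H}\|_F^2/(\sigma_h^2\mathrm{Tr}(\mathbf R_t)\mathrm{Tr}(\mathbf R_r))\to\infty$), with all other quantities held fixed.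
   Context: Let $K\le\min\{M,N\}$ be positive integers and $k\in\{1,\dots,K\}$. Fix $\hat{\mathbf H}\in\mathbb C^{N\times M}$, Hermitian positive definite $\mathbf R_r\in\mathbb C^{N\times N}$, $\mathbf R_t\in\mathbb C^{M\times M}$, and $\sigma_h^2>0$; the estimation error is $\mathbf E=\mathbf R_r^{1/2}\mathbf E_w\mathbf R_t^{1/2}$ with $\mathrm{vec}(\mathbf E_w)\sim\mathcal{CN}(\mathbf 0,\sigma_h^2\mathbf I_{NM})$. Fix $\mathbf V=(\mathbf v_1,\dots,\mathbf v_K)\in\mathbb C^{M\times K}$ with $\|\mathbf v_i\|=1$, a nonzero receive filter $\mathbf u\in\mathbb C^N$ of the near user $k$, coefficients $\beta_k,\beta_{\tilde k}\ge0$ with $\beta_k^2+\beta_{\tilde k}^2=1$, $P>0$, $d_k>0$, $\ell(d)=d^{-\alpha}$ with $\alpha>2$, $\sigma^2\ge0$, and $\sigma_k^2=\sigma^2\|\mathbf u\|^2$. With no inter-cell interference, the SINR for decoding the far user's message at user $k$ (SIC step) and for decoding its own message are $$\mathrm{SINR}_{k\to\tilde k}=\frac{P\ell(d_k)|\mathbf u^{\mathrm H}\hat{\mathbf H}\mathbf v_k|^2\beta_{\tilde k}^2}{P\ell(d_k)\left(|\mathbf u^{\mathrm H}\mathbf E\mathbf v_k|^2\beta_{\tilde k}^2+|\mathbf u^{\mathrm H}(\hat{\mathbf H}+\mathbf E)\mathbf v_k|^2\beta_k^2+\sum_{i\ne k}|\mathbf u^{\mathrm H}(\hat{\mathbf H}+\mathbf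 E)\mathbf v_i|^2\right)+\sigma_k^2},$$ $$\mathrm{SINR}_k=\frac{P\ell(d_k)|\mathbf u^{\mathrm H}\hat{\mathbf H}\mathbf v_k|^2\beta_k^2}{P\ell(d_k)\left(|\mathbf u^{\mathrm H}\mathbf E\mathbf v_k|^2+\sum_{i\ne k}|\mathbf u^{\mathrm H}(\hat{\mathbf H}+\mathbf E)\mathbf v_i|^2\right)+\sigma_k^2}.$$ Define $\mu_i=\mathbf u^{\mathrm H}\hat{\mathbf H}\mathbf v_i$, $\boldsymbol\nu_1=(\mu_1,\dots,\mu_{k-1},\beta_k^2\mu_k,\mu_{k+1},\dots,\mu_K)^{\mathrm T}$, $\boldsymbol\nu_2=(\mu_1,\dots,\mu_{k-1},0,\mu_{k+1},\dots,\mu_K)^{\mathrm T}$, and $\boldsymbol\Sigma=\sigma_h^2(\mathbf u^{\mathrm H}\mathbf R_r\mathbf u)(\mathbf V^{\mathrm H}\mathbf R_t\mathbf V)^{\mathrm T}$ (the covariance of $(\mathbf u^{\mathrm H}\mathbf E\mathbf V)^{\mathrm T}$) with eigendecomposition $\boldsymbol\Sigma=\boldsymbol\Psi\boldsymbol\Delta\boldsymbol\Psi^{\mathrm H}$, $\boldsymbol\Psi=(\boldsymbol\psi_1,\dots,\boldsymbol\psi_K)$ unitary. *)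

theory Defs
  imports "HOL-Analysis.Analysis"
begin

text \<open>Complex vectors and matrices are HOL-Analysis finite Cartesian types:
  a vector in C^n is complex^'n, an n x m matrix is complex^'m^'n (row index 'n).\<close>

definition cdot :: "complex^'n \<Rightarrow> complex^'n \<Rightarrow> complex" where
  "cdot x y = (\<Sum>i\<in>UNIV. cnj (x$i) * y$i)"

definition ctrans :: "complex^'m^'n \<Rightarrow> complex^'n^'m" where
  "ctrans A = (\<chi> i j. cnj (A$j$i))"

definition hermitian :: "complex^'n^'n \<Rightarrow> bool" where
  "hermitian A \<longleftrightarrow> ctrans A = A"

definition pos_def :: "complex^'n^'n \<Rightarrow> bool" where
  "pos_def A \<longleftrightarrow> hermitian A \<and> (\<forall>x. x \<noteq> 0 \<longrightarrow> Re (cdot x (A *v x)) > 0)"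

definition pos_semidef :: "complex^'n^'n \<Rightarrow> bool" where
  "pos_semidef A \<longleftrightarrow> hermitian A \<and> (\<forall>x. Re (cdot x (A *v x)) \<ge> 0)"

definition unitary :: "complex^'n^'n \<Rightarrow> bool" where
  "unitary U \<longleftrightarrow> U ** ctrans U = mat 1 \<and> ctrans U ** U = mat 1"

definition diag_mat :: "(('n::finite) \<Rightarrow> real) \<Rightarrow> complex^'n^'n" where
  "diag_mat d = (\<chi> i j. if i = j then complex_of_real (d i) else 0)"

text \<open>Distribution of E_w: vec(E_w) ~ CN(0, s I), i.e. i.i.d. circularly-symmetric
  complex Gaussian entries with density (1/(pi s)) exp(-|z|^2/s) w.r.t. Lebesgue
  measure on C (= R^2).\<close>
definition cgauss_mat :: "real \<Rightarrow> (complex^'m^'n) measure" where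
  "cgauss_mat s = density lborel
     (\<lambda>X. ennreal (\<Prod>i\<in>UNIV. \<Prod>j\<in>UNIV. exp (- (cmod (X$i$j))\<^sup>2 / s) / (pi * s)))"

definition pathloss :: "real \<Rightarrow> real \<Rightarrow> real" where
  "pathloss \<alpha> d = d powr (- \<alpha>)"

end

theory Submission
  imports Defs "HOL-Probability.Probability" "HOL-Real_Asymp.Real_Asymp"
begin

text \<open>The outage event depends on \<open>E_w\<close> only through the error gains
  \<open>e_i = u^H R_r^{1/2} E_w R_t^{1/2} v_i\<close>, a linear image of \<open>E_w\<close>, and both SINRs are
  continuous in \<open>e\<close> at \<open>e = 0\<close>. Since \<open>\<Psi>\<close> is unitary, \<open>\<Sum>|\<psi>_i^H \<nu>|^2 = \<parallel>\<nu>\<parallel>^2\<close>, so the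
  hypotheses say precisely that at \<open>e = 0\<close> both rates are achieved with a strict margin (only the
  unitarity of \<open>\<Psi>\<close> is used, not the eigenvalues). Hence there is \<open>\<delta> > 0\<close> such that outage
  forces \<open>\<parallel>E_w\<parallel> \<ge> \<delta>\<close>, and the \<open>CN(0, \<sigma>_h^2 I)\<close> probability of that event is at most
  \<open>2^{NM} exp(-\<delta>^2 / (2 \<sigma>_h^2))\<close>, which tends to \<open>0\<close>.\<close>

lemma nn_integral_exp_square_lborel:
  assumes "c > 0"
  shows "(\<integral>\<^sup>+t. ennreal (exp (- t\<^sup>2 / c)) \<partial>lborel) = ennreal (sqrt (pi * c))"
proof -
  define \<sigma> where "\<sigma> = sqrt (c / 2)"
  have \<sigma>: "\<sigma> > 0" "\<sigma>\<^sup>2 = c / 2"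
    using assms by (auto simp: \<sigma>_def)
  have "exp (- t\<^sup>2 / c) = sqrt (pi * c) * normal_density 0 \<sigma> t" for t
    using \<sigma> assms by (simp add: normal_density_def real_sqrt_mult field_simps)
  then have "(\<integral>\<^sup>+t. ennreal (exp (- t\<^sup>2 / c)) \<partial>lborel)
      = (\<integral>\<^sup>+t. ennreal (sqrt (pi * c)) * ennreal (normal_density 0 \<sigma> t) \<partial>lborel)"
    using assms by (simp add: ennreal_mult)
  also have "\<dots> = ennreal (sqrt (pi * c)) * (\<integral>\<^sup>+t. ennreal (normal_density 0 \<sigma> t) \<partial>lborel)"
    by (rule nn_integral_cmult) measurable
  also have "(\<integral>\<^sup>+t. ennreal (normal_density 0 \<sigma> t) \<partial>lborel) = 1"
    using \<sigma>(1) by (subst nn_integral_eq_integral) auto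
  finally show ?thesis
    by simp
qed

lemma nn_integral_exp_norm_square_lborel:
  assumes "c > 0"
  shows "(\<integral>\<^sup>+x. ennreal (exp (- (norm (x::'a::euclidean_space))\<^sup>2 / c)) \<partial>lborel)
       = ennreal (sqrt (pi * c) ^ DIM('a))"
proof -
  have "(norm x)\<^sup>2 = (\<Sum>b\<in>Basis. (x \<bullet> b)\<^sup>2)" for x :: 'a
    by (subst power2_norm_eq_inner, subst euclidean_inner) (simp add: power2_eq_square)
  then have "exp (- (norm x)\<^sup>2 / c) = (\<Prod>b\<in>Basis. exp (- (x \<bullet> b)\<^sup>2 / c))" for x :: 'a
    by (simp add: exp_sum[symmetric] sum_divide_distrib[symmetric] sum_negf)
  then have "(\<integral>\<^sup>+x. ennreal (exp (- (norm (x::'a))\<^sup>2 / c)) \<partial>lborel)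
       = (\<integral>\<^sup>+x. (\<Prod>b\<in>Basis. ennreal (exp (- ((x::'a) \<bullet> b)\<^sup>2 / c))) \<partial>lborel)"
    by (simp add: prod_ennreal)
  also have "\<dots> = (\<Prod>b\<in>(Basis::'a set). \<integral>\<^sup>+t. ennreal (exp (- t\<^sup>2 / c)) \<partial>lborel)"
    by (rule nn_integral_lborel_prod) auto
  also have "\<dots> = (\<Prod>b\<in>(Basis::'a set). ennreal (sqrt (pi * c)))"
    by (simp only: nn_integral_exp_square_lborel[OF assms])
  also have "\<dots> = ennreal (sqrt (pi * c) ^ DIM('a))"
    using assms by (simp add: ennreal_power)
  finally show ?thesis .
qed

lemma cgauss_mat_eq_density:
  "(cgauss_mat s :: (complex^'m^'n) measure)
     = density lborel (\<lambda>X. ennreal (exp (- (norm X)\<^sup>2 / s) / (pi * s) ^ (CARD('n) * CARD('m))))"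
proof -
  have "(norm X)\<^sup>2 = (\<Sum>i\<in>UNIV. \<Sum>j\<in>UNIV. (cmod (X$i$j))\<^sup>2)" for X :: "complex^'m^'n"
    by (simp add: norm_vec_def L2_set_def sum_nonneg)
  then have "(\<Prod>i\<in>UNIV. \<Prod>j\<in>UNIV. exp (- (cmod (X$i$j))\<^sup>2 / s) / (pi * s))
      = exp (- (norm X)\<^sup>2 / s) / (pi * s) ^ (CARD('n) * CARD('m))" for X :: "complex^'m^'n"
    by (simp add: prod_dividef exp_sum[symmetric] sum_divide_distrib[symmetric] sum_negf
        flip: power_mult) (simp add: mult.commute)
  then show ?thesis
    unfolding cgauss_mat_def by simp
qed

lemma emeasure_cgauss_mat_norm_ge:
  assumes "\<delta> \<ge> 0" and "s > 0"
  shows "emeasure (cgauss_mat s :: (complex^'m^'n) measure) {X. \<delta> \<le> norm X}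
     \<le> ennreal (2 ^ (CARD('n) * CARD('m)) * exp (- \<delta>\<^sup>2 / (2 * s)))"
proof -
  let ?D = "CARD('n) * CARD('m)"
  let ?c = "exp (- \<delta>\<^sup>2 / (2 * s)) / (pi * s) ^ ?D"
  have "emeasure (cgauss_mat s :: (complex^'m^'n) measure) {X. \<delta> \<le> norm X}
     = (\<integral>\<^sup>+X. ennreal (exp (- (norm X)\<^sup>2 / s) / (pi * s) ^ ?D)
                * indicator {X::complex^'m^'n. \<delta> \<le> norm X} X \<partial>lborel)"
    unfolding cgauss_mat_eq_density by (rule emeasure_density) measurable
  also have "\<dots> \<le> (\<integral>\<^sup>+X. ennreal ?c * ennreal (exp (- (norm (X::complex^'m^'n))\<^sup>2 / (2 * s))) \<partial>lborel)"
  proof (rule nn_integral_mono)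
    fix X :: "complex^'m^'n"
    show "ennreal (exp (- (norm X)\<^sup>2 / s) / (pi * s) ^ ?D) * indicator {X. \<delta> \<le> norm X} X
        \<le> ennreal ?c * ennreal (exp (- (norm X)\<^sup>2 / (2 * s)))"
    proof (cases "\<delta> \<le> norm X")
      case True
      \<comment> \<open>half of the Gaussian exponent bounds the tail, the other half is integrated\<close>
      then have "- (norm X)\<^sup>2 / s \<le> - \<delta>\<^sup>2 / (2 * s) + - (norm X)\<^sup>2 / (2 * s)"
        using assms power_mono[OF True] by (simp add: field_simps)
      then have "exp (- (norm X)\<^sup>2 / s) / (pi * s) ^ ?D \<le> ?c * exp (- (norm X)\<^sup>2 / (2 * s))"
        using assms by (simp add: exp_add[symmetric] divide_right_mono)
      then show ?thesis
        using True assms by (simp add: ennreal_mult[symmetric] ennreal_leI)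
    qed simp
  qed
  also have "\<dots> = ennreal ?c * ennreal ((pi * (2 * s)) ^ ?D)"
  proof -
    have "DIM(complex^'m^'n) = 2 * ?D"
      by simp
    then have "sqrt (pi * (2 * s)) ^ DIM(complex^'m^'n) = (pi * (2 * s)) ^ ?D"
      using assms by (simp only: power_mult real_sqrt_pow2) simp
    then show ?thesis
      using nn_integral_exp_norm_square_lborel[of "2 * s", where 'a="complex^'m^'n"] assms
      by (subst nn_integral_cmult) auto
  qed
  also have "\<dots> = ennreal (2 ^ ?D * exp (- \<delta>\<^sup>2 / (2 * s)))"
    using assms by (simp add: ennreal_mult[symmetric] field_simps)
  finally show ?thesis .
qed

lemma tendsto_measure_cgauss_mat_zero:
  assumes "\<forall>\<^sub>F X in nhds 0. X \<notin> S"
  shows "((\<lambda>s. measure (cgauss_mat s :: (complex^'m^'n) measure) S) \<longlongrightarrow> 0) (at_right 0)"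
proof -
  let ?D = "CARD('n) * CARD('m)"
  obtain \<delta> where \<delta>: "\<delta> > 0" and "\<forall>X. dist X 0 < \<delta> \<longrightarrow> X \<notin> S"
    using assms unfolding eventually_nhds_metric by blast
  then have S: "S \<subseteq> {X. \<delta> \<le> norm X}"
    by (auto simp: dist_norm not_less[symmetric])
  have bound: "measure (cgauss_mat s :: (complex^'m^'n) measure) S \<le> 2 ^ ?D * exp (- \<delta>\<^sup>2 / (2 * s))"
    if "s > 0" for s
  proof -
    have "{X. \<delta> \<le> norm X} \<in> sets (cgauss_mat s :: (complex^'m^'n) measure)"
      unfolding cgauss_mat_def by simp measurable
    then have "emeasure (cgauss_mat s :: (complex^'m^'n) measure) S
        \<le> emeasure (cgauss_mat s :: (complex^'m^'n) measure) {X. \<delta> \<le> norm X}"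
      by (rule emeasure_mono[OF S])
    also have "\<dots> \<le> ennreal (2 ^ ?D * exp (- \<delta>\<^sup>2 / (2 * s)))"
      using \<delta> that by (intro emeasure_cgauss_mat_norm_ge) auto
    finally show ?thesis
      unfolding measure_def by (simp add: enn2real_leI)
  qed
  have upper: "\<forall>\<^sub>F s in at_right 0. measure (cgauss_mat s :: (complex^'m^'n) measure) S
      \<le> 2 ^ ?D * exp (- \<delta>\<^sup>2 / (2 * s))"
    by (rule eventually_mono[OF eventually_at_right_less bound])
  have lim: "((\<lambda>s. 2 ^ ?D * exp (- \<delta>\<^sup>2 / (2 * s))) \<longlongrightarrow> 0) (at_right (0::real))"
    using \<delta> by real_asymp
  show ?thesis
    by (rule tendsto_sandwich[OF _ upper tendsto_const lim]) simp
qed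

lemma cdot_add_right: "cdot u (x + y) = cdot u x + cdot u y"
  by (simp add: cdot_def distrib_left sum.distrib)

lemma cdot_self: "cdot x x = of_real (\<Sum>i\<in>UNIV. (cmod (x$i))\<^sup>2)"
  unfolding cdot_def of_real_sum complex_norm_square by (simp add: mult.commute)

lemma cdot_matrix_vector_mult_left: "cdot (A *v x) y = cdot x (ctrans A *v y)"
proof -
  have "cdot (A *v x) y = (\<Sum>j\<in>UNIV. \<Sum>i\<in>UNIV. cnj (x$i) * (cnj (A$j$i) * y$j))"
    by (simp add: cdot_def matrix_vector_mult_def sum_distrib_left sum_distrib_right mult_ac)
  also have "\<dots> = (\<Sum>i\<in>UNIV. \<Sum>j\<in>UNIV. cnj (x$i) * (cnj (A$j$i) * y$j))"
    by (rule sum.swap)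
  also have "\<dots> = cdot x (ctrans A *v y)"
    by (simp add: cdot_def ctrans_def matrix_vector_mult_def sum_distrib_left)
  finally show ?thesis .
qed

lemma ctrans_ctrans [simp]: "ctrans (ctrans A) = A"
  by (simp add: ctrans_def vec_eq_iff)

lemma cdot_column: "cdot (column i A) v = (ctrans A *v v) $ i"
  by (simp add: cdot_def column_def ctrans_def matrix_vector_mult_def mult.commute)

lemma sum_cmod_cdot_unitary_columns:
  assumes "unitary \<Psi>"
  shows "(\<Sum>i\<in>UNIV. (cmod (cdot (column i \<Psi>) v))\<^sup>2) = (\<Sum>j\<in>UNIV. (cmod (v$j))\<^sup>2)"
proof -
  let ?w = "ctrans \<Psi> *v v"
  have "complex_of_real (\<Sum>i\<in>UNIV. (cmod (?w$i))\<^sup>2) = cdot ?w ?w"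
    by (rule cdot_self[symmetric])
  also have "\<dots> = cdot v ((\<Psi> ** ctrans \<Psi>) *v v)"
    by (simp add: cdot_matrix_vector_mult_left matrix_vector_mul_assoc)
  also have "\<dots> = complex_of_real (\<Sum>j\<in>UNIV. (cmod (v$j))\<^sup>2)"
    using assms by (simp add: unitary_def cdot_self)
  finally show ?thesis
    by (simp only: cdot_column of_real_eq_iff)
qed

lemma tendsto_cdot_sandwich_columns_zero:
  fixes A :: "complex^'n^'n" and B :: "complex^'m^'m" and V :: "complex^'k^'m"
  shows "((\<lambda>X::complex^'m^'n. \<chi> i. cdot u ((A ** X ** B) *v column i V)) \<longlongrightarrow> 0) (nhds 0)"
proof -
  have "isCont (\<lambda>X::complex^'m^'n. \<chi> i. cdot u ((A ** X ** B) *v column i V)) X0" for X0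
    unfolding isCont_def
    by (intro tendsto_vec_lambda)
      (simp add: cdot_def matrix_vector_mult_def matrix_matrix_mult_def;
       intro tendsto_intros isCont_vec_nth[unfolded isCont_def] tendsto_ident_at)
  from isCont_tendsto_compose[OF this[of 0] filterlim_ident] show ?thesis
    by (simp add: cdot_def flip: zero_vec_def)
qed

lemma eventually_less_log2_one_plus:
  fixes f :: "'a::t2_space \<Rightarrow> real"
  assumes "isCont f x" and "0 \<le> f x" and "r < log 2 (1 + f x)"
  shows "\<forall>\<^sub>F y in nhds x. r < log 2 (1 + f y)"
proof -
  have "isCont (\<lambda>y. log 2 (1 + f y)) x"
    using assms(1,2) by (intro continuous_intros) auto
  then have "\<forall>\<^sub>F y in at x. r < log 2 (1 + f y)"
    unfolding isCont_def using assms(3) by (rule order_tendstoD)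
  then show ?thesis
    using assms(3) by (simp add: eventually_nhds_conv_at)
qed

text \<open>\<open>sinr_sic\<close> is \<open>SINR_{k\<rightarrow>k~}\<close> (the SIC step) and \<open>sinr_own\<close> is \<open>SINR_k\<close>, written as
  functions of the error gains \<open>e$i = u^H E v_i\<close>, with \<open>\<mu>$i = u^H \<hat>H v_i\<close>, \<open>Pl = P l(d_k)\<close>
  and \<open>N0 = \<sigma>_k^2\<close>.\<close>

definition sinr_sic :: "real \<Rightarrow> real \<Rightarrow> real \<Rightarrow> real \<Rightarrow> complex^'k \<Rightarrow> 'k \<Rightarrow> complex^'k \<Rightarrow> real" where
  "sinr_sic Pl N0 \<beta>k \<beta>t \<mu> k e =
     Pl * (cmod (\<mu>$k))\<^sup>2 * \<beta>t\<^sup>2 /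
     (Pl * ((cmod (e$k))\<^sup>2 * \<beta>t\<^sup>2 + (cmod (\<mu>$k + e$k))\<^sup>2 * \<beta>k\<^sup>2
            + (\<Sum>i\<in>UNIV - {k}. (cmod (\<mu>$i + e$i))\<^sup>2)) + N0)"

definition sinr_own :: "real \<Rightarrow> real \<Rightarrow> real \<Rightarrow> complex^'k \<Rightarrow> 'k \<Rightarrow> complex^'k \<Rightarrow> real" where
  "sinr_own Pl N0 \<beta>k \<mu> k e =
     Pl * (cmod (\<mu>$k))\<^sup>2 * \<beta>k\<^sup>2 /
     (Pl * ((cmod (e$k))\<^sup>2 + (\<Sum>i\<in>UNIV - {k}. (cmod (\<mu>$i + e$i))\<^sup>2)) + N0)"

lemma sinr_sic_nonneg: "Pl \<ge> 0 \<Longrightarrow> N0 \<ge> 0 \<Longrightarrow> 0 \<le> sinr_sic Pl N0 \<beta>k \<beta>t \<mu> k e"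
  by (simp add: sinr_sic_def sum_nonneg)

lemma sinr_own_nonneg: "Pl \<ge> 0 \<Longrightarrow> N0 \<ge> 0 \<Longrightarrow> 0 \<le> sinr_own Pl N0 \<beta>k \<mu> k e"
  by (simp add: sinr_own_def sum_nonneg)

lemma isCont_sinr_sic:
  assumes "sinr_sic Pl N0 \<beta>k \<beta>t \<mu> k e \<noteq> 0"
  shows "isCont (sinr_sic Pl N0 \<beta>k \<beta>t \<mu> k) e"
  using assms unfolding sinr_sic_def by (intro continuous_intros; simp)

lemma isCont_sinr_own:
  assumes "sinr_own Pl N0 \<beta>k \<mu> k e \<noteq> 0"
  shows "isCont (sinr_own Pl N0 \<beta>k \<mu> k) e"
  using assms unfolding sinr_own_def by (intro continuous_intros; simp)

lemma sinr_sic_zero_error: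
  assumes "\<beta>k\<^sup>2 + \<beta>t\<^sup>2 = 1" and "Pl > 0"
  shows "sinr_sic Pl N0 \<beta>k \<beta>t \<mu> k 0
       = \<beta>t\<^sup>2 * (cmod (\<mu>$k))\<^sup>2 /
         ((\<Sum>j\<in>UNIV. (cmod (if j = k then of_real (\<beta>k\<^sup>2) * \<mu>$j else \<mu>$j))\<^sup>2)
          + \<beta>k\<^sup>2 * \<beta>t\<^sup>2 * (cmod (\<mu>$k))\<^sup>2 + N0 / Pl)"
proof -
  let ?m = "(cmod (\<mu>$k))\<^sup>2" and ?S = "\<Sum>i\<in>UNIV - {k}. (cmod (\<mu>$i))\<^sup>2"
  have "(\<Sum>j\<in>UNIV. (cmod (if j = k then of_real (\<beta>k\<^sup>2) * \<mu>$j else \<mu>$j))\<^sup>2)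
      = (cmod (of_real (\<beta>k\<^sup>2) * \<mu>$k))\<^sup>2 + ?S"
    by (simp add: sum.remove[of UNIV k])
  also have "(cmod (of_real (\<beta>k\<^sup>2) * \<mu>$k))\<^sup>2 = \<beta>k\<^sup>2 * \<beta>k\<^sup>2 * ?m"
    by (simp only: norm_mult norm_of_real abs_of_nonneg[OF zero_le_power2] power_mult_distrib
        power2_eq_square[of "\<beta>k\<^sup>2"])
  finally have "(\<Sum>j\<in>UNIV. (cmod (if j = k then of_real (\<beta>k\<^sup>2) * \<mu>$j else \<mu>$j))\<^sup>2)
      = \<beta>k\<^sup>2 * \<beta>k\<^sup>2 * ?m + ?S" .
  moreover have "\<beta>k\<^sup>2 * \<beta>k\<^sup>2 * ?m + \<beta>k\<^sup>2 * \<beta>t\<^sup>2 * ?m = ?m * \<beta>k\<^sup>2 * (\<beta>k\<^sup>2 + \<beta>t\<^sup>2)"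
    by (simp only: algebra_simps)
  ultimately have "(\<Sum>j\<in>UNIV. (cmod (if j = k then of_real (\<beta>k\<^sup>2) * \<mu>$j else \<mu>$j))\<^sup>2)
      + \<beta>k\<^sup>2 * \<beta>t\<^sup>2 * ?m + N0 / Pl = (Pl * (?m * \<beta>k\<^sup>2 + ?S) + N0) / Pl"
    using assms by (simp add: add_divide_distrib)
  then show ?thesis
    by (simp add: sinr_sic_def mult.commute)
qed

lemma sinr_own_zero_error:
  assumes "Pl > 0"
  shows "sinr_own Pl N0 \<beta>k \<mu> k 0
       = (cmod (\<mu>$k))\<^sup>2 * \<beta>k\<^sup>2 / ((\<Sum>j\<in>UNIV. (cmod (if j = k then 0 else \<mu>$j))\<^sup>2) + N0 / Pl)"
proof -
  have "(\<Sum>j\<in>UNIV. (cmod (if j = k then 0 else \<mu>$j))\<^sup>2) = (\<Sum>i\<in>UNIV - {k}. (cmod (\<mu>$i))\<^sup>2)"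
    by (simp add: sum.remove[of UNIV k])
  moreover have "(\<Sum>i\<in>UNIV - {k}. (cmod (\<mu>$i))\<^sup>2) + N0 / Pl
      = (Pl * (\<Sum>i\<in>UNIV - {k}. (cmod (\<mu>$i))\<^sup>2) + N0) / Pl"
    using assms by (simp add: add_divide_distrib)
  ultimately show ?thesis
    by (simp add: sinr_own_def mult.commute)
qed

theorem theorem6:
  fixes Hh :: "complex^'m^'n"          \<comment> \<open>\<hat>H, N x M\<close>
    and Rr Sr :: "complex^'n^'n"       \<comment> \<open>R_r and its Hermitian PSD square root\<close>
    and Rt St :: "complex^'m^'m"       \<comment> \<open>R_t and its Hermitian PSD square root\<close>
    and V :: "complex^'k^'m"
    and u :: "complex^'n"
    and k :: 'k
    and \<beta>k \<beta>t P dk \<alpha> \<sigma>2 Rk Rt_rate :: real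
    and \<Psi> :: "complex^'k^'k" and \<Delta> :: "'k \<Rightarrow> real"
  assumes KM: "CARD('k) \<le> CARD('m)" and KN: "CARD('k) \<le> CARD('n)"
    and Rr_pd: "pos_def Rr" and Rt_pd: "pos_def Rt"
    and Sr: "pos_semidef Sr" "Sr ** Sr = Rr"
    and St: "pos_semidef St" "St ** St = Rt"
    and V_unit: "\<forall>i. norm (column i V) = 1"
    and u_nz: "u \<noteq> 0"
    and beta: "\<beta>k \<ge> 0" "\<beta>t \<ge> 0" "\<beta>k\<^sup>2 + \<beta>t\<^sup>2 = 1"
    and P: "P > 0" and dk: "dk > 0" and alpha: "\<alpha> > 2" and sig: "\<sigma>2 \<ge> 0"
    and rates: "Rk > 0" "Rt_rate > 0"
    \<comment> \<open>eigendecomposition of \<Sigma>/\<sigma>_h^2 = (u^H R_r u)(V^H R_t V)^T (eigenvectors of \<Sigma> do not depend on \<sigma>_h^2)\<close>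
    and Psi: "unitary \<Psi>"
    and eig: "(\<chi> i j. cdot u (Rr *v u) * (ctrans V ** Rt ** V)$j$i) = \<Psi> ** diag_mat \<Delta> ** ctrans \<Psi>"
    and cond_t: "let \<mu> = (\<lambda>i. cdot u (Hh *v column i V));
                    \<nu>1 = (\<chi> i. if i = k then complex_of_real (\<beta>k\<^sup>2) * \<mu> i else \<mu> i);
                    \<sigma>k2 = \<sigma>2 * (norm u)\<^sup>2
                 in Rt_rate < log 2 (1 + \<beta>t\<^sup>2 * (cmod (\<mu> k))\<^sup>2 /
                      ((\<Sum>i\<in>UNIV. (cmod (cdot (column i \<Psi>) \<nu>1))\<^sup>2)
                        + \<beta>k\<^sup>2 * \<beta>t\<^sup>2 * (cmod (\<mu> k))\<^sup>2 + \<sigma>k2 / (P * pathloss \<alpha> dk)))"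
    and cond_k: "let \<mu> = (\<lambda>i. cdot u (Hh *v column i V));
                    \<nu>2 = (\<chi> i. if i = k then 0 else \<mu> i);
                    \<sigma>k2 = \<sigma>2 * (norm u)\<^sup>2
                 in Rk < log 2 (1 + (cmod (\<mu> k))\<^sup>2 * \<beta>k\<^sup>2 /
                      ((\<Sum>i\<in>UNIV. (cmod (cdot (column i \<Psi>) \<nu>2))\<^sup>2) + \<sigma>k2 / (P * pathloss \<alpha> dk)))"
  shows "(((\<lambda>sh. measure (cgauss_mat sh :: (complex^'m^'n) measure)
            {Ew. let E = Sr ** Ew ** St;
                     Pl = P * pathloss \<alpha> dk;
                     \<sigma>k2 = \<sigma>2 * (norm u)\<^sup>2;
                     SINRkt = Pl * (cmod (cdot u (Hh *v column k V)))\<^sup>2 * \<beta>t\<^sup>2 /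
                       (Pl * ((cmod (cdot u (E *v column k V)))\<^sup>2 * \<beta>t\<^sup>2
                              + (cmod (cdot u ((Hh + E) *v column k V)))\<^sup>2 * \<beta>k\<^sup>2
                              + (\<Sum>i\<in>UNIV - {k}. (cmod (cdot u ((Hh + E) *v column i V)))\<^sup>2))
                        + \<sigma>k2);
                     SINRk = Pl * (cmod (cdot u (Hh *v column k V)))\<^sup>2 * \<beta>k\<^sup>2 /
                       (Pl * ((cmod (cdot u (E *v column k V)))\<^sup>2
                              + (\<Sum>i\<in>UNIV - {k}. (cmod (cdot u ((Hh + E) *v column i V)))\<^sup>2))
                        + \<sigma>k2)
                 in log 2 (1 + SINRkt) < Rt_rate \<or> log 2 (1 + SINRk) < Rk}))
         \<longlongrightarrow> 0) (at_right 0)"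
proof -
  define \<mu> :: "complex^'k" where "\<mu> = (\<chi> i. cdot u (Hh *v column i V))"
  define e :: "complex^'m^'n \<Rightarrow> complex^'k"
    where "e = (\<lambda>Ew. \<chi> i. cdot u ((Sr ** Ew ** St) *v column i V))"
  define Pl where "Pl = P * pathloss \<alpha> dk"
  define N0 where "N0 = \<sigma>2 * (norm u)\<^sup>2"
  have Pl: "Pl > 0"
    using P dk by (simp add: Pl_def pathloss_def)
  have N0: "N0 \<ge> 0"
    using sig by (simp add: N0_def)
  have sic0: "Rt_rate < log 2 (1 + sinr_sic Pl N0 \<beta>k \<beta>t \<mu> k 0)"
    using cond_t unfolding sinr_sic_zero_error[OF beta(3) Pl] unfolding \<mu>_def Pl_def N0_def
    by (simp add: sum_cmod_cdot_unitary_columns[OF Psi] Let_def cong: if_cong)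
  have own0: "Rk < log 2 (1 + sinr_own Pl N0 \<beta>k \<mu> k 0)"
    using cond_k unfolding sinr_own_zero_error[OF Pl] unfolding \<mu>_def Pl_def N0_def
    by (simp add: sum_cmod_cdot_unitary_columns[OF Psi] Let_def cong: if_cong)
  have "\<forall>\<^sub>F x in nhds 0. Rt_rate < log 2 (1 + sinr_sic Pl N0 \<beta>k \<beta>t \<mu> k x)
                       \<and> Rk < log 2 (1 + sinr_own Pl N0 \<beta>k \<mu> k x)"
    using sic0 own0 rates Pl N0
    by (intro eventually_conj eventually_less_log2_one_plus isCont_sinr_sic isCont_sinr_own
        sinr_sic_nonneg sinr_own_nonneg) auto
  moreover have "filterlim e (nhds 0) (nhds 0)"
    unfolding e_def by (rule tendsto_cdot_sandwich_columns_zero)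
  ultimately have "\<forall>\<^sub>F Ew in nhds 0. Rt_rate < log 2 (1 + sinr_sic Pl N0 \<beta>k \<beta>t \<mu> k (e Ew))
                       \<and> Rk < log 2 (1 + sinr_own Pl N0 \<beta>k \<mu> k (e Ew))"
    by (rule eventually_compose_filterlim)
  then show ?thesis
    by (intro tendsto_measure_cgauss_mat_zero, elim eventually_mono)
      (simp add: sinr_sic_def sinr_own_def \<mu>_def e_def Pl_def N0_def Let_def
        matrix_vector_mult_add_rdistrib cdot_add_right)
qed

end
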